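(* A skew lattice $S$ is a left distributive solution of the Yang–Baxter equation if and only if it satisfies the identity \[ ((y\vee x)\wedge z)\vee(x\wedge y)=((y\wedge z)\vee x)\wedge(z\vee y)\quad\text{for all }x,y,z\in S. \] In particular, left distributive solutions form a variety of skew lattices.
   Context: A skew lattice is a set $S$ with two binary operations $\wedge,\vee$, each idempotent and associative, satisfying the absorption laws $x\wedge(x\vee y)=x=x\vee(x\wedge y)$ and $(x\wedge y)\vee y=y=(x\vee y)\wedge y$ for all $x,y\in S$. $S$ is a left distributive solution if $r_L:S\times S\to S\times S$, $r_L(x,y)=(x\wedge y,y\vee x)$, satisfies $(r_L\times\mathrm{id})\circ(\mathrm{id}\times r_L)\circ(r_L\times\mathrm{id})=(\mathrm{id}\times r_L)\circ(r_L\times\mathrm{id})\circ(\mathrm{id}\times r_L)$. *)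

theory Defs
  imports Main
begin

definition skew_lattice :: "'a set \<Rightarrow> ('a \<Rightarrow> 'a \<Rightarrow> 'a) \<Rightarrow> ('a \<Rightarrow> 'a \<Rightarrow> 'a) \<Rightarrow> bool" where
  "skew_lattice S m j \<longleftrightarrow>
     (\<forall>x\<in>S. \<forall>y\<in>S. m x y \<in> S \<and> j x y \<in> S) \<and>
     (\<forall>x\<in>S. m x x = x \<and> j x x = x) \<and>
     (\<forall>x\<in>S. \<forall>y\<in>S. \<forall>z\<in>S. m (m x y) z = m x (m y z) \<and> j (j x y) z = j x (j y z)) \<and>
     (\<forall>x\<in>S. \<forall>y\<in>S. m x (j x y) = x \<and> j x (m x y) = x \<and>
                      j (m x y) y = y \<and> m (j x y) y = y)"

definition r_L :: "('a \<Rightarrow> 'a \<Rightarrow> 'a) \<Rightarrow> ('a \<Rightarrow> 'a \<Rightarrow> 'a) \<Rightarrow> 'a \<times> 'a \<Rightarrow> 'a \<times> 'a" where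
  "r_L m j = (\<lambda>(x, y). (m x y, j y x))"

definition r12 :: "('a \<times> 'a \<Rightarrow> 'a \<times> 'a) \<Rightarrow> 'a \<times> 'a \<times> 'a \<Rightarrow> 'a \<times> 'a \<times> 'a" where
  "r12 r = (\<lambda>(x, y, z). let (u, v) = r (x, y) in (u, v, z))"

definition r23 :: "('a \<times> 'a \<Rightarrow> 'a \<times> 'a) \<Rightarrow> 'a \<times> 'a \<times> 'a \<Rightarrow> 'a \<times> 'a \<times> 'a" where
  "r23 r = (\<lambda>(x, y, z). let (v, w) = r (y, z) in (x, v, w))"

definition left_distributive_solution :: "'a set \<Rightarrow> ('a \<Rightarrow> 'a \<Rightarrow> 'a) \<Rightarrow> ('a \<Rightarrow> 'a \<Rightarrow> 'a) \<Rightarrow> bool" where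
  "left_distributive_solution S m j \<longleftrightarrow>
     (\<forall>x\<in>S. \<forall>y\<in>S. \<forall>z\<in>S.
        (r12 (r_L m j) \<circ> r23 (r_L m j) \<circ> r12 (r_L m j)) (x, y, z) =
        (r23 (r_L m j) \<circ> r12 (r_L m j) \<circ> r23 (r_L m j)) (x, y, z))"

end

theory Submission
  imports Defs
begin

text \<open>The outer
  components agree in every skew lattice, since \<open>y \<and> (y \<or> x) = y\<close> and \<open>y \<or> (y \<and> z) = y\<close>
  let the stray factors be absorbed; hence the braid relation reduces to the equality of the
  middle components, which is the stated identity.\<close>

lemma braid_lhs_r_L:
  "(r12 (r_L m j) \<circ> r23 (r_L m j) \<circ> r12 (r_L m j)) (x, y, z) =
     (m (m x y) (m (j y x) z), j (m (j y x) z) (m x y), j z (j y x))"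
  by (simp add: r12_def r23_def r_L_def)

lemma braid_rhs_r_L:
  "(r23 (r_L m j) \<circ> r12 (r_L m j) \<circ> r23 (r_L m j)) (x, y, z) =
     (m x (m y z), m (j (m y z) x) (j z y), j (j z y) (j (m y z) x))"
  by (simp add: r12_def r23_def r_L_def)

lemma skew_lattice_meet_absorb_join:
  assumes "skew_lattice S m j" and "x \<in> S" "y \<in> S" "z \<in> S"
  shows "m (m x y) (m (j y x) z) = m x (m y z)"
proof -
  have closed: "j y x \<in> S" "m (j y x) z \<in> S"
    using assms unfolding skew_lattice_def by blast+
  have assoc: "\<And>a b c. a \<in> S \<Longrightarrow> b \<in> S \<Longrightarrow> c \<in> S \<Longrightarrow> m (m a b) c = m a (m b c)"
    and absorb: "m y (j y x) = y"
    using assms unfolding skew_lattice_def by blast+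
  have "m (m x y) (m (j y x) z) = m x (m y (m (j y x) z))"
    using assms closed assoc by simp
  also have "m y (m (j y x) z) = m (m y (j y x)) z"
    using assms closed assoc by simp
  finally show ?thesis
    by (simp add: absorb)
qed

lemma skew_lattice_join_absorb_meet:
  assumes "skew_lattice S m j" and "x \<in> S" "y \<in> S" "z \<in> S"
  shows "j (j z y) (j (m y z) x) = j z (j y x)"
proof -
  have closed: "m y z \<in> S" "j (m y z) x \<in> S"
    using assms unfolding skew_lattice_def by blast+
  have assoc: "\<And>a b c. a \<in> S \<Longrightarrow> b \<in> S \<Longrightarrow> c \<in> S \<Longrightarrow> j (j a b) c = j a (j b c)"
    and absorb: "j y (m y z) = y"
    using assms unfolding skew_lattice_def by blast+
  have "j (j z y) (j (m y z) x) = j z (j y (j (m y z) x))"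
    using assms closed assoc by simp
  also have "j y (j (m y z) x) = j (j y (m y z)) x"
    using assms closed assoc by simp
  finally show ?thesis
    by (simp add: absorb)
qed

theorem mainTheorem10:
  assumes "skew_lattice S m j"
  shows "left_distributive_solution S m j \<longleftrightarrow>
         (\<forall>x\<in>S. \<forall>y\<in>S. \<forall>z\<in>S.
            j (m (j y x) z) (m x y) = m (j (m y z) x) (j z y))"
proof -
  have "(r12 (r_L m j) \<circ> r23 (r_L m j) \<circ> r12 (r_L m j)) (x, y, z) =
        (r23 (r_L m j) \<circ> r12 (r_L m j) \<circ> r23 (r_L m j)) (x, y, z) \<longleftrightarrow>
        j (m (j y x) z) (m x y) = m (j (m y z) x) (j z y)"
    if "x \<in> S" "y \<in> S" "z \<in> S" for x y z
    unfolding braid_lhs_r_L braid_rhs_r_L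
    using skew_lattice_meet_absorb_join[OF assms that]
      skew_lattice_join_absorb_meet[OF assms that]
    by simp
  then show ?thesis
    unfolding left_distributive_solution_def by blast
qed

end
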